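(* Assume: (A1) $f(x,y)$ and each component of $g(x,y)$ are convex in $y$ for each fixed $x$, and $f,g$ are twice continuously differentiable; (A2) $Y\subseteq\mathbb{R}^m$ is a compact convex set with $\{y:\exists x\in X \text{ such that } g(x,y)\le 0\}\subseteq\mathrm{int}(Y)$; (A3) $F$ and $G$ are twice continuously differentiable; (R1) for each $x\in X$ there exists $y$ with $g(x,y)<0$; (R2) $X$ is compact and nonempty, and the constraint set $\{x:G(x)\le0\}$ satisfies MFCQ at each $x\in X$. Let $\overline{\epsilon}\ge0$. Then, as $\epsilon\downarrow\overline{\epsilon}$, $\mu\downarrow0$ and $z\downarrow0$, $\limsup_{\epsilon\downarrow\overline{\epsilon},\mu\downarrow0,z\downarrow0}\big(z\text{-}\arg\min\mathsf{DBP}(\epsilon,\mu)\big)\subseteq\arg\min\mathsf{DBP}(\overline{\epsilon},0)$, and $z\text{-}\min\mathsf{DBP}(\epsilon,\mu)\to\min\mathsf{DBP}(\overline{\epsilon},0)$.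
   Context: Let $F:\mathbb{R}^n\times\mathbb{R}^m\to\mathbb{R}$, $f:\mathbb{R}^n\times\mathbb{R}^m\to\mathbb{R}$, $g:\mathbb{R}^n\times\mathbb{R}^m\to\mathbb{R}^p$, $G:\mathbb{R}^n\to\mathbb{R}^q$; vector inequalities componentwise; $X=\{x:G(x)\le0\}$; MFCQ for $\{x:G(x)\le0\}$ at $x$ means there is $d$ with $\nabla G_i(x)^{\mathsf T}d<0$ for all active indices $i$. For $\mu\ge0$, $h_\mu(\lambda,x)=\min_y\{\mu\|y\|^2+f(x,y)+\lambda^{\mathsf T}g(x,y):y\in Y\}$ with $Y$ from (A2); $\mathcal{C}(\epsilon,\mu)=\{(x,y,\lambda): G(x)\le0,\ g(x,y)\le\epsilon,\ \lambda\ge0,\ f(x,y)-h_\mu(\lambda,x)\le\epsilon\}$; $\mathsf{DBP}(\epsilon,\mu)$ is the problem of minimizing $F(x,y)$ over $(x,y,\lambda)\in\mathcal{C}(\epsilon,\mu)$. $z\text{-}\arg\min\mathsf{DBP}(\epsilon,\mu)$ is the set of feasible $(x,y,\lambda)$ with $F(x,y)\le\inf\mathsf{DBP}(\epsilon,\mu)+z$, and $z\text{-}\min\mathsf{DBP}(\epsilon,\mu)$ denotes the objective value at such points (any value in $[\inf, \inf+z]$ attained there). $\limsup$ of sets is the Painlevé–Kuratowski outer limit: the set of all cluster points of sequences of elements of the sets along the parameter sequence. *)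

theory Defs
  imports "HOL-Analysis.Analysis"
begin

definition C2 :: "('a::euclidean_space \<Rightarrow> 'b::real_normed_vector) \<Rightarrow> bool" where
  "C2 f \<longleftrightarrow> (\<exists>Df D2f.
     (\<forall>p. (f has_derivative blinfun_apply (Df p)) (at p)) \<and>
     (\<forall>p. (Df has_derivative blinfun_apply (D2f p)) (at p)) \<and>
     continuous_on UNIV D2f)"

definition Xset :: "(real^'n \<Rightarrow> real^'q) \<Rightarrow> (real^'n) set" where
  "Xset G = {x. \<forall>i. G x $ i \<le> 0}"

definition MFCQ :: "(real^'n \<Rightarrow> real^'q) \<Rightarrow> real^'n \<Rightarrow> bool" where
  "MFCQ G x \<longleftrightarrow> (\<exists>d. \<forall>i. G x $ i = 0 \<longrightarrow>
      frechet_derivative (\<lambda>u. G u $ i) (at x) d < 0)"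

definition hmu :: "(real^'m) set \<Rightarrow> (real^'n \<Rightarrow> real^'m \<Rightarrow> real) \<Rightarrow> (real^'n \<Rightarrow> real^'m \<Rightarrow> real^'p)
    \<Rightarrow> real \<Rightarrow> real^'p \<Rightarrow> real^'n \<Rightarrow> real" where
  "hmu Y f g \<mu> lam x = Inf ((\<lambda>y. \<mu> * (norm y)\<^sup>2 + f x y + lam \<bullet> g x y) ` Y)"

definition Cset :: "(real^'n \<Rightarrow> real^'q) \<Rightarrow> (real^'n \<Rightarrow> real^'m \<Rightarrow> real) \<Rightarrow> (real^'n \<Rightarrow> real^'m \<Rightarrow> real^'p)
    \<Rightarrow> (real^'m) set \<Rightarrow> real \<Rightarrow> real \<Rightarrow> ((real^'n) \<times> (real^'m) \<times> (real^'p)) set" where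
  "Cset G f g Y \<epsilon> \<mu> = {(x, y, lam). (\<forall>i. G x $ i \<le> 0) \<and> (\<forall>i. g x y $ i \<le> \<epsilon>) \<and>
      (\<forall>i. 0 \<le> lam $ i) \<and> f x y - hmu Y f g \<mu> lam x \<le> \<epsilon>}"

definition DBP_inf :: "(real^'n \<Rightarrow> real^'m \<Rightarrow> real) \<Rightarrow> (real^'n \<Rightarrow> real^'q) \<Rightarrow> (real^'n \<Rightarrow> real^'m \<Rightarrow> real)
    \<Rightarrow> (real^'n \<Rightarrow> real^'m \<Rightarrow> real^'p) \<Rightarrow> (real^'m) set \<Rightarrow> real \<Rightarrow> real \<Rightarrow> real" where
  "DBP_inf F G f g Y \<epsilon> \<mu> = Inf ((\<lambda>(x, y, lam). F x y) ` Cset G f g Y \<epsilon> \<mu>)"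

definition DBP_zargmin :: "(real^'n \<Rightarrow> real^'m \<Rightarrow> real) \<Rightarrow> (real^'n \<Rightarrow> real^'q) \<Rightarrow> (real^'n \<Rightarrow> real^'m \<Rightarrow> real)
    \<Rightarrow> (real^'n \<Rightarrow> real^'m \<Rightarrow> real^'p) \<Rightarrow> (real^'m) set \<Rightarrow> real \<Rightarrow> real \<Rightarrow> real
    \<Rightarrow> ((real^'n) \<times> (real^'m) \<times> (real^'p)) set" where
  "DBP_zargmin F G f g Y \<epsilon> \<mu> z = {(x, y, lam) \<in> Cset G f g Y \<epsilon> \<mu>. F x y \<le> DBP_inf F G f g Y \<epsilon> \<mu> + z}"

definition DBP_argmin :: "(real^'n \<Rightarrow> real^'m \<Rightarrow> real) \<Rightarrow> (real^'n \<Rightarrow> real^'q) \<Rightarrow> (real^'n \<Rightarrow> real^'m \<Rightarrow> real)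
    \<Rightarrow> (real^'n \<Rightarrow> real^'m \<Rightarrow> real^'p) \<Rightarrow> (real^'m) set \<Rightarrow> real \<Rightarrow> real
    \<Rightarrow> ((real^'n) \<times> (real^'m) \<times> (real^'p)) set" where
  "DBP_argmin F G f g Y \<epsilon> \<mu> = {(x, y, lam) \<in> Cset G f g Y \<epsilon> \<mu>.
      \<forall>(x', y', lam') \<in> Cset G f g Y \<epsilon> \<mu>. F x y \<le> F x' y'}"

end

theory Submission
  imports Defs
begin

text \<open>The feasible sets C(\<epsilon>, \<mu>) increase with \<epsilon> and \<mu>, so C(\<epsilon>bar, 0) \<subseteq> C(\<epsilon>, \<mu>) and
  inf DBP(\<epsilon>, \<mu>) \<le> inf DBP(\<epsilon>bar, 0). Conversely they are closed under limits as
  (\<epsilon>, \<mu>) \<rightarrow> (\<epsilon>bar, 0), since h_\<mu>(\<lambda>, x) is an infimum of functions continuous in (\<mu>, \<lambda>, x).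
  Feasible points also lie in a compact set: x \<in> X; y in a sublevel set of the convex constraint g,
  bounded uniformly over X because a ray from a Slater point would leave the bounded set Y while
  staying asymptotically feasible; and \<lambda>, because evaluating h_\<mu> at a Slater point y0 with
  g(x, y0) \<le> c < 0 gives -c (\<lambda>_1 + ... + \<lambda>_p) \<le> \<mu>|y0|^2 + f(x, y0) - f(x, y) + \<epsilon>. Hence cluster points of
  z-minimizers exist, are feasible for DBP(\<epsilon>bar, 0), and are optimal there by the first inclusion;
  the optimal values are squeezed between these limits and inf DBP(\<epsilon>bar, 0) + z.\<close>

lemma C2_imp_continuous_on: "C2 h \<Longrightarrow> continuous_on UNIV h"
  unfolding C2_def by (metis continuous_at_imp_continuous_on has_derivative_continuous)

lemma tendsto_uncurried_continuous:
  assumes "continuous_on UNIV (\<lambda>(x, y). H x y)" "(xs \<longlongrightarrow> x) F" "(ys \<longlongrightarrow> y) F"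
  shows "((\<lambda>k. H (xs k) (ys k)) \<longlongrightarrow> H x y) F"
  using continuous_on_tendsto_compose[OF assms(1) tendsto_Pair[OF assms(2,3)]] by simp

lemma continuous_on_uncurried_slice:
  assumes "continuous_on UNIV (\<lambda>(x, y). H x y)"
  shows "continuous_on S (H x)"
  using continuous_on_compose2[OF assms continuous_on_Pair[OF continuous_on_const continuous_on_id]]
  by (simp add: continuous_on_subset)

lemma convex_on_segment_le:
  assumes "convex_on UNIV h" "h y0 \<le> 0" "h y \<le> e" "0 \<le> t" "t \<le> 1"
  shows "h (y0 + t *\<^sub>R (y - y0)) \<le> t * e"
proof -
  have "y0 + t *\<^sub>R (y - y0) = (1 - t) *\<^sub>R y0 + t *\<^sub>R y" by (simp add: algebra_simps)
  then have "h (y0 + t *\<^sub>R (y - y0)) \<le> (1 - t) * h y0 + t * h y"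
    using convex_onD[OF assms(1), of t y0 y] assms(4,5) by simp
  also have "\<dots> \<le> t * e"
    using assms(2-5) by (smt (verit) mult_left_mono mult_nonneg_nonpos)
  finally show ?thesis .
qed

lemma eventually_bounded_imp_convergent_subsequence:
  fixes u :: "nat \<Rightarrow> 'a::heine_borel"
  assumes "bounded S" "eventually (\<lambda>k. u k \<in> S) sequentially"
  obtains r l where "strict_mono r" "(u \<circ> r) \<longlonglongrightarrow> l"
proof -
  obtain N where N: "\<And>k. k \<ge> N \<Longrightarrow> u k \<in> S"
    using assms(2) unfolding eventually_sequentially by blast
  have "bounded (range (\<lambda>k. u (k + N)))"
    by (rule bounded_subset[OF assms(1)]) (auto intro: N)
  then obtain r l where "strict_mono r" "((\<lambda>k. u (k + N)) \<circ> r) \<longlonglongrightarrow> l"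
    using bounded_imp_convergent_subsequence by blast
  moreover have "strict_mono (\<lambda>k. r k + N)"
    using \<open>strict_mono r\<close> by (simp add: strict_mono_def)
  ultimately show thesis
    by (intro that[of "\<lambda>k. r k + N" l]) (simp_all add: o_def)
qed

locale dual_bilevel =
  fixes F f :: "real^'n \<Rightarrow> real^'m \<Rightarrow> real"
    and g :: "real^'n \<Rightarrow> real^'m \<Rightarrow> real^'p"
    and G :: "real^'n \<Rightarrow> real^'q"
    and Y :: "(real^'m) set"
  assumes convex_g: "\<And>x i. convex_on UNIV (\<lambda>y. g x y $ i)"
    and continuous_f: "continuous_on UNIV (\<lambda>(x, y). f x y)"
    and continuous_g: "continuous_on UNIV (\<lambda>(x, y). g x y)"
    and continuous_F: "continuous_on UNIV (\<lambda>(x, y). F x y)"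
    and continuous_G: "continuous_on UNIV G"
    and compact_Y: "compact Y"
    and lower_feasible_in_Y: "{y. \<exists>x \<in> Xset G. \<forall>i. g x y $ i \<le> 0} \<subseteq> Y"
    and slater: "\<And>x. x \<in> Xset G \<Longrightarrow> \<exists>y. \<forall>i. g x y $ i < 0"
    and compact_X: "compact (Xset G)"
    and X_nonempty: "Xset G \<noteq> {}"
begin

lemma tendsto_g_nth:
  "(xs \<longlongrightarrow> x) F' \<Longrightarrow> (ys \<longlongrightarrow> y) F' \<Longrightarrow> ((\<lambda>k. g (xs k) (ys k) $ i) \<longlongrightarrow> g x y $ i) F'"
  by (rule tendsto_vec_nth) (rule tendsto_uncurried_continuous[OF continuous_g])

lemma slater_point_in_Y:
  assumes "x \<in> Xset G" "\<forall>i. g x y $ i < 0"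
  shows "y \<in> Y"
  using lower_feasible_in_Y assms by (auto intro: less_imp_le)

lemma Y_nonempty: "Y \<noteq> {}"
  using X_nonempty slater slater_point_in_Y by blast

lemma eventually_uniform_slater:
  assumes "xs \<longlonglongrightarrow> a" "\<forall>i. g a y0 $ i < 0"
  obtains c where "c < 0" "eventually (\<lambda>k. \<forall>i. g (xs k) y0 $ i \<le> c) sequentially"
proof
  define m where "m = Max (range (\<lambda>i. g a y0 $ i))"
  have "m < 0" unfolding m_def using assms(2) by (subst Max_less_iff) auto
  then show "m / 2 < 0" by simp
  have "g a y0 $ i < m / 2" for i
  proof -
    have "g a y0 $ i \<le> m" unfolding m_def by (rule Max_ge) auto
    with \<open>m < 0\<close> show ?thesis by linarith
  qed
  then have "eventually (\<lambda>k. g (xs k) y0 $ i < m / 2) sequentially" for i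
    using order_tendstoD(2)[OF tendsto_g_nth[OF assms(1) tendsto_const]] by blast
  then have "eventually (\<lambda>k. \<forall>i. g (xs k) y0 $ i < m / 2) sequentially"
    by (rule eventually_all_finite)
  then show "eventually (\<lambda>k. \<forall>i. g (xs k) y0 $ i \<le> m / 2) sequentially"
    by (rule eventually_mono) (simp add: less_imp_le)
qed

text \<open>The witnesses are the points y0 + (D / |ys k - y0|) (ys k - y0) on the segments towards ys k.\<close>
lemma sphere_points_asymptotically_feasible:
  assumes y0: "eventually (\<lambda>k. \<forall>i. g (xs k) y0 $ i \<le> 0) sequentially"
    and ys: "\<And>k i. g (xs k) (ys k) $ i \<le> e"
    and ys_top: "filterlim (\<lambda>k. norm (ys k)) at_top sequentially" and D: "0 < D"
  obtains w t where "t \<longlonglongrightarrow> 0"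
    "eventually (\<lambda>k. w k \<in> sphere y0 D \<and> (\<forall>i. g (xs k) (w k) $ i \<le> t k * e)) sequentially"
proof
  define d where "d k = norm (ys k - y0)" for k
  have d_top: "filterlim d at_top sequentially"
  proof (rule filterlim_at_top_mono[OF _ always_eventually])
    show "LIM k sequentially. - norm y0 + norm (ys k) :> at_top"
      by (rule filterlim_tendsto_add_at_top[OF tendsto_const ys_top])
    show "\<forall>k. - norm y0 + norm (ys k) \<le> d k"
      unfolding d_def using norm_triangle_ineq2 by (smt (verit))
  qed
  show "(\<lambda>k. D / d k) \<longlonglongrightarrow> 0"
    by (rule tendsto_divide_0[OF tendsto_const filterlim_at_top_imp_at_infinity[OF d_top]])
  have "eventually (\<lambda>k. D < d k) sequentially"
    using d_top by (simp add: filterlim_at_top_dense)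
  with y0 show "eventually (\<lambda>k. y0 + (D / d k) *\<^sub>R (ys k - y0) \<in> sphere y0 D \<and>
      (\<forall>i. g (xs k) (y0 + (D / d k) *\<^sub>R (ys k - y0)) $ i \<le> D / d k * e)) sequentially"
  proof eventually_elim
    case (elim k)
    then have t: "0 \<le> D / d k" "D / d k \<le> 1" using D by auto
    have "0 < d k" using elim D by linarith
    then show ?case
      using D convex_on_segment_le[OF convex_g _ ys t] elim by (simp add: d_def dist_norm)
  qed
qed

lemma not_filterlim_norm_constraint_sublevel:
  assumes xs: "xs \<longlonglongrightarrow> a" and a: "a \<in> Xset G" and ys: "\<And>k i. g (xs k) (ys k) $ i \<le> e"
  shows "\<not> filterlim (\<lambda>k. norm (ys k)) at_top sequentially"
proof
  assume ys_top: "filterlim (\<lambda>k. norm (ys k)) at_top sequentially"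
  obtain y0 where y0: "\<forall>i. g a y0 $ i < 0" using slater[OF a] by blast
  obtain R0 where R0: "R0 > 0" "Y \<subseteq> ball 0 R0"
    using bounded_subset_ballD[OF compact_imp_bounded[OF compact_Y]] by blast
  obtain c where c: "c < 0" and c_ev: "eventually (\<lambda>k. \<forall>i. g (xs k) y0 $ i \<le> c) sequentially"
    using eventually_uniform_slater[OF xs y0] by blast
  have y0_ev: "eventually (\<lambda>k. \<forall>i. g (xs k) y0 $ i \<le> 0) sequentially"
    using c_ev by (rule eventually_mono) (use c in \<open>meson less_imp_le order_trans\<close>)
  have "0 < 2 * R0" using R0(1) by simp
  then obtain w t where t: "t \<longlonglongrightarrow> 0"
    and w_ev: "eventually (\<lambda>k. w k \<in> sphere y0 (2 * R0) \<and> (\<forall>i. g (xs k) (w k) $ i \<le> t k * e)) sequentially"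
    by (rule sphere_points_asymptotically_feasible[OF y0_ev ys ys_top])
  have w_sphere: "eventually (\<lambda>k. w k \<in> sphere y0 (2 * R0)) sequentially"
    using w_ev by (rule eventually_mono) simp
  then obtain s wl where s: "strict_mono s" and ws: "(w \<circ> s) \<longlonglongrightarrow> wl"
    by (rule eventually_bounded_imp_convergent_subsequence[OF bounded_sphere])
  have "wl \<in> sphere y0 (2 * R0)"
    by (rule Lim_in_closed_set[OF closed_sphere _ _ ws])
      (use eventually_subseq[OF s w_sphere] in \<open>simp_all add: o_def\<close>)
  have "g a wl $ i \<le> 0" for i
  proof (rule LIMSEQ_le)
    show "(\<lambda>k. g ((xs \<circ> s) k) ((w \<circ> s) k) $ i) \<longlonglongrightarrow> g a wl $ i"
      by (rule tendsto_g_nth[OF LIMSEQ_subseq_LIMSEQ[OF xs s] ws])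
    from LIMSEQ_subseq_LIMSEQ[OF tendsto_mult_left_zero[OF t] s]
    show "(\<lambda>k. t (s k) * e) \<longlonglongrightarrow> 0" by (simp add: o_def)
    show "\<exists>N. \<forall>k\<ge>N. g ((xs \<circ> s) k) ((w \<circ> s) k) $ i \<le> t (s k) * e"
      using eventually_subseq[OF s w_ev] unfolding eventually_sequentially by auto
  qed
  then have "wl \<in> Y" using lower_feasible_in_Y a by blast
  moreover have "y0 \<in> Y" using slater_point_in_Y[OF a y0] .
  ultimately have "norm y0 < R0" "norm wl < R0" using R0(2) by auto
  then have "dist y0 wl < 2 * R0"
    using norm_triangle_ineq4[of y0 wl] unfolding dist_norm by linarith
  with \<open>wl \<in> sphere y0 (2 * R0)\<close> show False by simp
qed

lemma bounded_constraint_sublevel: "bounded {y. \<exists>x \<in> Xset G. \<forall>i. g x y $ i \<le> e}"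
proof (rule ccontr)
  assume "\<not> ?thesis"
  then have "\<exists>y \<in> {y. \<exists>x \<in> Xset G. \<forall>i. g x y $ i \<le> e}. real n < norm y" for n :: nat
    unfolding bounded_iff by (meson not_le)
  then have "\<forall>n::nat. \<exists>x y. x \<in> Xset G \<and> (\<forall>i. g x y $ i \<le> e) \<and> real n < norm y"
    by blast
  then obtain xs ys where xs: "\<And>n. xs n \<in> Xset G" and ys: "\<And>n i. g (xs n) (ys n) $ i \<le> e"
    and ys_large: "\<And>n. real n < norm (ys n)"
    by metis
  obtain a r where a: "a \<in> Xset G" and r: "strict_mono r" and xr: "(xs \<circ> r) \<longlonglongrightarrow> a"
    using seq_compactE[OF compact_imp_seq_compact[OF compact_X]] xs by metis
  have "filterlim (\<lambda>k. norm (ys (r k))) at_top sequentially"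
  proof (rule filterlim_at_top_mono[OF filterlim_real_sequentially always_eventually])
    show "\<forall>k. real k \<le> norm (ys (r k))"
      using seq_suble[OF r] ys_large by (meson less_imp_le of_nat_le_iff order_trans)
  qed
  with not_filterlim_norm_constraint_sublevel[OF xr a, of "ys \<circ> r" e] ys show False by simp
qed

abbreviation objective :: "(real^'n) \<times> (real^'m) \<times> (real^'p) \<Rightarrow> real" where
  "objective \<equiv> \<lambda>(x, y, lam). F x y"

lemma tendsto_objective:
  assumes "qs \<longlonglongrightarrow> (x, y, lam)"
  shows "(\<lambda>k. objective (qs k)) \<longlonglongrightarrow> F x y"
  using tendsto_uncurried_continuous[OF continuous_F tendsto_fst[OF assms] tendsto_fst[OF tendsto_snd[OF assms]]]
  by (simp add: case_prod_beta)

lemma hmu_bdd_below: "bdd_below ((\<lambda>y. \<mu> * (norm y)\<^sup>2 + f x y + lam \<bullet> g x y) ` Y)"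
proof -
  have "continuous_on Y (\<lambda>y. \<mu> * (norm y)\<^sup>2 + f x y + lam \<bullet> g x y)"
    by (intro continuous_intros continuous_on_uncurried_slice[OF continuous_f]
        continuous_on_uncurried_slice[OF continuous_g])
  then show ?thesis
    by (intro bounded_imp_bdd_below compact_imp_bounded compact_continuous_image compact_Y)
qed

lemma hmu_le: "y \<in> Y \<Longrightarrow> hmu Y f g \<mu> lam x \<le> \<mu> * (norm y)\<^sup>2 + f x y + lam \<bullet> g x y"
  unfolding hmu_def by (rule cINF_lower[OF hmu_bdd_below])

lemma hmu_mono: "\<mu> \<le> \<mu>' \<Longrightarrow> hmu Y f g \<mu> lam x \<le> hmu Y f g \<mu>' lam x"
  unfolding hmu_def
  by (rule cINF_mono[OF Y_nonempty hmu_bdd_below]) (auto intro!: bexI mult_right_mono)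

lemma Cset_mono:
  assumes "e \<le> e'" "\<mu> \<le> \<mu>'"
  shows "Cset G f g Y e \<mu> \<subseteq> Cset G f g Y e' \<mu>'"
proof (clarify)
  fix x y lam assume "(x, y, lam) \<in> Cset G f g Y e \<mu>"
  moreover have "hmu Y f g \<mu> lam x \<le> hmu Y f g \<mu>' lam x" by (rule hmu_mono[OF assms(2)])
  ultimately show "(x, y, lam) \<in> Cset G f g Y e' \<mu>'"
    using assms(1) unfolding Cset_def by (auto intro: order_trans)
qed

lemma Cset_multiplier_sum_bound:
  assumes "(x, y, lam) \<in> Cset G f g Y e \<mu>" "y0 \<in> Y" "\<forall>i. g x y0 $ i \<le> c"
  shows "- c * (\<Sum>i\<in>UNIV. lam $ i) \<le> \<mu> * (norm y0)\<^sup>2 + f x y0 - f x y + e"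
proof -
  have lam: "0 \<le> lam $ i" for i using assms(1) unfolding Cset_def by auto
  have "f x y - e \<le> hmu Y f g \<mu> lam x" using assms(1) unfolding Cset_def by auto
  also have "\<dots> \<le> \<mu> * (norm y0)\<^sup>2 + f x y0 + (\<Sum>i\<in>UNIV. lam $ i * g x y0 $ i)"
    using hmu_le[OF assms(2)] by (simp add: inner_vec_def)
  also have "(\<Sum>i\<in>UNIV. lam $ i * g x y0 $ i) \<le> c * (\<Sum>i\<in>UNIV. lam $ i)"
    unfolding sum_distrib_left using assms(3) lam
    by (intro sum_mono) (metis mult.commute mult_left_mono)
  finally show ?thesis by simp
qed

lemma objective_bdd_below: "bdd_below (objective ` Cset G f g Y e \<mu>)"
proof -
  obtain R where R: "\<And>x y. x \<in> Xset G \<Longrightarrow> \<forall>i. g x y $ i \<le> e \<Longrightarrow> norm y \<le> R"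
    using bounded_constraint_sublevel[of e] unfolding bounded_iff by blast
  have "objective ` Cset G f g Y e \<mu> \<subseteq> (\<lambda>(x, y). F x y) ` (Xset G \<times> cball 0 R)"
  proof clarify
    fix x y lam assume "(x, y, lam) \<in> Cset G f g Y e \<mu>"
    then have "x \<in> Xset G" "\<forall>i. g x y $ i \<le> e" unfolding Cset_def Xset_def by auto
    then show "F x y \<in> (\<lambda>(x, y). F x y) ` (Xset G \<times> cball 0 R)" using R by force
  qed
  moreover have "compact ((\<lambda>(x, y). F x y) ` (Xset G \<times> cball 0 R))"
    by (intro compact_continuous_image continuous_on_subset[OF continuous_F] compact_Times
        compact_X compact_cball) auto
  ultimately show ?thesis
    by (meson bdd_below_mono bounded_imp_bdd_below compact_imp_bounded)
qed

lemma DBP_inf_le_objective: "q \<in> Cset G f g Y e \<mu> \<Longrightarrow> DBP_inf F G f g Y e \<mu> \<le> objective q"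
  unfolding DBP_inf_def by (rule cInf_lower[OF imageI objective_bdd_below])

lemma DBP_inf_antimono:
  assumes "e \<le> e'" "\<mu> \<le> \<mu>'" "Cset G f g Y e \<mu> \<noteq> {}"
  shows "DBP_inf F G f g Y e' \<mu>' \<le> DBP_inf F G f g Y e \<mu>"
  unfolding DBP_inf_def
  using assms by (intro cInf_superset_mono objective_bdd_below image_mono Cset_mono) auto

lemma Cset_closed_sequentially:
  assumes es: "es \<longlonglongrightarrow> e" and ms: "ms \<longlonglongrightarrow> \<mu>"
    and qs: "\<And>k. qs k \<in> Cset G f g Y (es k) (ms k)" and lim: "qs \<longlonglongrightarrow> (x, y, lam)"
  shows "(x, y, lam) \<in> Cset G f g Y e \<mu>"
proof -
  define xs ys ls where "xs = (\<lambda>k. fst (qs k))" and "ys = (\<lambda>k. fst (snd (qs k)))"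
    and "ls = (\<lambda>k. snd (snd (qs k)))"
  have qe: "qs k = (xs k, ys k, ls k)" for k by (simp add: xs_def ys_def ls_def)
  have xl: "xs \<longlonglongrightarrow> x" and yl: "ys \<longlonglongrightarrow> y" and ll: "ls \<longlonglongrightarrow> lam"
    using tendsto_fst[OF lim] tendsto_fst[OF tendsto_snd[OF lim]] tendsto_snd[OF tendsto_snd[OF lim]]
    by (simp_all add: xs_def ys_def ls_def)
  have C: "\<forall>i. G (xs k) $ i \<le> 0" "\<forall>i. g (xs k) (ys k) $ i \<le> es k" "\<forall>i. 0 \<le> ls k $ i"
    "f (xs k) (ys k) - es k \<le> hmu Y f g (ms k) (ls k) (xs k)" for k
    using qs[of k] unfolding qe Cset_def by auto
  have "G x $ i \<le> 0" for i
    using C(1) by (intro LIMSEQ_le_const2[OF tendsto_vec_nth[OF continuous_on_tendsto_compose[OF continuous_G xl]]]) auto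
  moreover have "g x y $ i \<le> e" for i
    using C(2) by (intro LIMSEQ_le[OF tendsto_g_nth[OF xl yl] es]) auto
  moreover have "0 \<le> lam $ i" for i
    using C(3) by (intro LIMSEQ_le_const[OF tendsto_vec_nth[OF ll]]) auto
  moreover have "f x y - e \<le> hmu Y f g \<mu> lam x"
    unfolding hmu_def
  proof (rule cINF_greatest[OF Y_nonempty])
    fix y' assume "y' \<in> Y"
    show "f x y - e \<le> \<mu> * (norm y')\<^sup>2 + f x y' + lam \<bullet> g x y'"
    proof (rule LIMSEQ_le)
      show "(\<lambda>k. f (xs k) (ys k) - es k) \<longlonglongrightarrow> f x y - e"
        by (intro tendsto_intros tendsto_uncurried_continuous[OF continuous_f] xl yl es)
      show "(\<lambda>k. ms k * (norm y')\<^sup>2 + f (xs k) y' + ls k \<bullet> g (xs k) y') \<longlonglongrightarrow> \<mu> * (norm y')\<^sup>2 + f x y' + lam \<bullet> g x y'"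
        by (intro tendsto_intros tendsto_uncurried_continuous[OF continuous_f] tendsto_uncurried_continuous[OF continuous_g] xl ms ll)
      show "\<exists>N. \<forall>k\<ge>N. f (xs k) (ys k) - es k \<le> ms k * (norm y')\<^sup>2 + f (xs k) y' + ls k \<bullet> g (xs k) y'"
        using C(4) hmu_le[OF \<open>y' \<in> Y\<close>] order_trans by blast
    qed
  qed
  ultimately show ?thesis unfolding Cset_def by auto
qed

lemma Cset_multipliers_eventually_bounded:
  assumes es: "es \<longlonglongrightarrow> e" and ms: "ms \<longlonglongrightarrow> \<mu>" and xs: "xs \<longlonglongrightarrow> a" and ys: "ys \<longlonglongrightarrow> b"
    and a: "a \<in> Xset G" and C: "\<And>k. (xs k, ys k, ls k) \<in> Cset G f g Y (es k) (ms k)"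
  obtains L where "eventually (\<lambda>k. norm (ls k) \<le> L) sequentially"
proof -
  obtain y0 where y0: "\<forall>i. g a y0 $ i < 0" using slater[OF a] by blast
  obtain c where c: "c < 0" and slater_ev: "eventually (\<lambda>k. \<forall>i. g (xs k) y0 $ i \<le> c) sequentially"
    using eventually_uniform_slater[OF xs y0] by blast
  define h where "h k = ms k * (norm y0)\<^sup>2 + f (xs k) y0 - f (xs k) (ys k) + es k" for k
  define H where "H = \<mu> * (norm y0)\<^sup>2 + f a y0 - f a b + e + 1"
  have "h \<longlonglongrightarrow> \<mu> * (norm y0)\<^sup>2 + f a y0 - f a b + e"
    unfolding h_def by (intro tendsto_intros tendsto_uncurried_continuous[OF continuous_f] xs ys es ms)
  then have "eventually (\<lambda>k. h k < H) sequentially"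
    unfolding H_def by (rule order_tendstoD) simp
  with slater_ev have "eventually (\<lambda>k. norm (ls k) \<le> H / - c) sequentially"
  proof eventually_elim
    case (elim k)
    have "- c * (\<Sum>i\<in>UNIV. ls k $ i) \<le> h k"
      unfolding h_def by (rule Cset_multiplier_sum_bound[OF C slater_point_in_Y[OF a y0]]) (use elim in simp)
    then have "(\<Sum>i\<in>UNIV. ls k $ i) * - c \<le> H"
      using elim by (simp add: algebra_simps)
    then have "(\<Sum>i\<in>UNIV. ls k $ i) \<le> H / - c"
      by (subst pos_le_divide_eq) (use c in auto)
    moreover have "norm (ls k) \<le> (\<Sum>i\<in>UNIV. ls k $ i)"
      using norm_le_l1_cart[of "ls k"] C[of k] unfolding Cset_def by simp
    ultimately show ?case by linarith
  qed
  then show thesis by (rule that)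
qed

lemma Cset_seq_convergent_subseq:
  assumes es: "es \<longlonglongrightarrow> e" and ms: "ms \<longlonglongrightarrow> \<mu>"
    and qs: "\<And>k. qs k \<in> Cset G f g Y (es k) (ms k)"
  obtains r q where "strict_mono r" "(qs \<circ> r) \<longlonglongrightarrow> q"
proof -
  define xs ys ls where "xs = (\<lambda>k. fst (qs k))" and "ys = (\<lambda>k. fst (snd (qs k)))"
    and "ls = (\<lambda>k. snd (snd (qs k)))"
  have qe: "qs k = (xs k, ys k, ls k)" for k by (simp add: xs_def ys_def ls_def)
  have qC: "(xs k, ys k, ls k) \<in> Cset G f g Y (es k) (ms k)" for k using qs qe by metis
  then have xX: "xs k \<in> Xset G" and g_le: "\<forall>i. g (xs k) (ys k) $ i \<le> es k" for k
    unfolding Cset_def Xset_def by auto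
  obtain R where R: "\<And>x y. x \<in> Xset G \<Longrightarrow> \<forall>i. g x y $ i \<le> e + 1 \<Longrightarrow> norm y \<le> R"
    using bounded_constraint_sublevel[of "e + 1"] unfolding bounded_iff by blast
  have "eventually (\<lambda>k. es k < e + 1) sequentially"
    using order_tendstoD(2)[OF es] by simp
  then have yR: "eventually (\<lambda>k. norm (ys k) \<le> R) sequentially"
  proof (rule eventually_mono)
    fix k assume "es k < e + 1"
    then have "\<forall>i. g (xs k) (ys k) $ i \<le> e + 1" using g_le[of k] by (auto intro: order_trans less_imp_le)
    then show "norm (ys k) \<le> R" using R xX by blast
  qed
  then have "eventually (\<lambda>k. (xs k, ys k) \<in> Xset G \<times> cball 0 R) sequentially"
    by (rule eventually_mono) (simp add: xX)
  then obtain r1 ab where r1: "strict_mono r1" and lab: "((\<lambda>k. (xs k, ys k)) \<circ> r1) \<longlonglongrightarrow> ab"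
    by (rule eventually_bounded_imp_convergent_subsequence[OF bounded_Times[OF compact_imp_bounded[OF compact_X] bounded_cball]])
  obtain a b where ab: "ab = (a, b)" by (cases ab)
  have xa: "(\<lambda>k. xs (r1 k)) \<longlonglongrightarrow> a" and yb: "(\<lambda>k. ys (r1 k)) \<longlonglongrightarrow> b"
    using tendsto_fst[OF lab] tendsto_snd[OF lab] by (simp_all add: ab o_def)
  have a: "a \<in> Xset G"
    by (rule closed_sequentially[OF compact_imp_closed[OF compact_X] _ xa]) (simp add: xX)
  obtain L where lL: "eventually (\<lambda>k. norm (ls (r1 k)) \<le> L) sequentially"
    using Cset_multipliers_eventually_bounded[OF LIMSEQ_subseq_LIMSEQ[OF es r1] LIMSEQ_subseq_LIMSEQ[OF ms r1] xa yb a]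
      qC by (metis comp_apply)
  have "eventually (\<lambda>k. qs (r1 k) \<in> Xset G \<times> cball 0 R \<times> cball 0 L) sequentially"
    using eventually_subseq[OF r1 yR] lL
  proof eventually_elim
    case (elim k)
    then show ?case using xX[of "r1 k"] by (simp add: qe)
  qed
  then obtain r2 q where r2: "strict_mono r2" and "((\<lambda>k. qs (r1 k)) \<circ> r2) \<longlonglongrightarrow> q"
    by (rule eventually_bounded_imp_convergent_subsequence[OF bounded_Times[OF compact_imp_bounded[OF compact_X]
          bounded_Times[OF bounded_cball bounded_cball]]])
  with strict_mono_o[OF r1 r2] show thesis
    by (intro that[of "r1 \<circ> r2" q]) (simp_all add: o_def)
qed

lemma Cset_seq_cluster_point:
  assumes es: "es \<longlonglongrightarrow> e" and ms: "ms \<longlonglongrightarrow> \<mu>"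
    and qs: "\<And>k. qs k \<in> Cset G f g Y (es k) (ms k)"
  obtains r q where "strict_mono r" "(qs \<circ> r) \<longlonglongrightarrow> q" "q \<in> Cset G f g Y e \<mu>"
proof -
  obtain r q where r: "strict_mono r" and lim: "(qs \<circ> r) \<longlonglongrightarrow> q"
    using Cset_seq_convergent_subseq[OF es ms qs] by blast
  obtain x y lam where q: "q = (x, y, lam)" by (cases q)
  have "q \<in> Cset G f g Y e \<mu>"
    unfolding q using LIMSEQ_subseq_LIMSEQ[OF es r] LIMSEQ_subseq_LIMSEQ[OF ms r] qs lim[unfolded q]
    by (intro Cset_closed_sequentially[of "es \<circ> r" _ "ms \<circ> r" _ "qs \<circ> r"]) simp_all
  with r lim show thesis by (rule that)
qed

lemma DBP_zargmin_iff:
  "q \<in> DBP_zargmin F G f g Y e \<mu> z \<longleftrightarrow> q \<in> Cset G f g Y e \<mu> \<and> objective q \<le> DBP_inf F G f g Y e \<mu> + z"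
  unfolding DBP_zargmin_def by (cases q) auto

lemma zargmin_limit_in_argmin:
  assumes e_le: "\<And>k. e \<le> es k" and ms_nonneg: "\<And>k. 0 \<le> ms k"
    and es: "es \<longlonglongrightarrow> e" and ms: "ms \<longlonglongrightarrow> 0" and zs: "zs \<longlonglongrightarrow> 0"
    and ps: "\<And>k. ps k \<in> DBP_zargmin F G f g Y (es k) (ms k) (zs k)" and lim: "ps \<longlonglongrightarrow> p"
  shows "p \<in> DBP_argmin F G f g Y e 0"
proof -
  obtain x y lam where p: "p = (x, y, lam)" by (cases p)
  have psC: "ps k \<in> Cset G f g Y (es k) (ms k)" for k
    using ps by (simp add: DBP_zargmin_iff)
  have pC: "p \<in> Cset G f g Y e 0"
    unfolding p by (rule Cset_closed_sequentially[OF es ms psC lim[unfolded p]])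
  have "F x y \<le> objective q" if q: "q \<in> Cset G f g Y e 0" for q
  proof (rule LIMSEQ_le)
    show "(\<lambda>k. objective (ps k)) \<longlonglongrightarrow> F x y" by (rule tendsto_objective[OF lim[unfolded p]])
    show "(\<lambda>k. objective q + zs k) \<longlonglongrightarrow> objective q" using tendsto_add[OF tendsto_const zs] by simp
    have "objective (ps k) \<le> objective q + zs k" for k
    proof -
      have "objective (ps k) \<le> DBP_inf F G f g Y (es k) (ms k) + zs k"
        using ps[of k] by (simp add: DBP_zargmin_iff)
      moreover have "q \<in> Cset G f g Y (es k) (ms k)"
        using Cset_mono[OF e_le ms_nonneg] q by blast
      ultimately show ?thesis using DBP_inf_le_objective by fastforce
    qed
    then show "\<exists>N. \<forall>k\<ge>N. objective (ps k) \<le> objective q + zs k" by blast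
  qed
  with pC show ?thesis unfolding p DBP_argmin_def by auto
qed

lemma Cset_seq_eventually_objective_gt:
  assumes es: "es \<longlonglongrightarrow> e" and ms: "ms \<longlonglongrightarrow> \<mu>"
    and qs: "\<And>k. qs k \<in> Cset G f g Y (es k) (ms k)" and b: "b < DBP_inf F G f g Y e \<mu>"
  shows "eventually (\<lambda>k. b < objective (qs k)) sequentially"
proof (rule ccontr)
  assume "\<not> ?thesis"
  then have "infinite {k. objective (qs k) \<le> b}"
    by (simp add: not_eventually cofinite_eq_sequentially[symmetric] frequently_cofinite not_less)
  then obtain s :: "nat \<Rightarrow> nat" where s: "strict_mono s" and le_b: "\<And>k. objective (qs (s k)) \<le> b"
    using infinite_enumerate by blast
  obtain r q where lim: "(qs \<circ> s \<circ> r) \<longlonglongrightarrow> q" and qC: "q \<in> Cset G f g Y e \<mu>"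
    using Cset_seq_cluster_point[OF LIMSEQ_subseq_LIMSEQ[OF es s] LIMSEQ_subseq_LIMSEQ[OF ms s]] qs
    by (metis comp_apply)
  obtain x y lam where q: "q = (x, y, lam)" by (cases q)
  have "objective q \<le> b"
    using LIMSEQ_le_const2[OF tendsto_objective[OF lim[unfolded q]]] le_b q by auto
  with DBP_inf_le_objective[OF qC] b show False by simp
qed

lemma zargmin_objective_tendsto_inf:
  assumes e_le: "\<And>k. e \<le> es k" and ms_nonneg: "\<And>k. 0 \<le> ms k"
    and es: "es \<longlonglongrightarrow> e" and ms: "ms \<longlonglongrightarrow> 0" and zs: "zs \<longlonglongrightarrow> 0"
    and ps: "\<And>k. ps k \<in> DBP_zargmin F G f g Y (es k) (ms k) (zs k)"
  shows "(\<lambda>k. objective (ps k)) \<longlonglongrightarrow> DBP_inf F G f g Y e 0"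
proof (rule order_tendstoI)
  let ?L = "DBP_inf F G f g Y e 0"
  have psC: "ps k \<in> Cset G f g Y (es k) (ms k)" for k
    using ps by (simp add: DBP_zargmin_iff)
  show "eventually (\<lambda>k. b < objective (ps k)) sequentially" if "b < ?L" for b
    by (rule Cset_seq_eventually_objective_gt[OF es ms psC that])
  obtain r q where "q \<in> Cset G f g Y e 0"
    using Cset_seq_cluster_point[OF es ms psC] by blast
  then have nonempty: "Cset G f g Y e 0 \<noteq> {}" by blast
  have upper: "objective (ps k) \<le> ?L + zs k" for k
  proof -
    have "objective (ps k) \<le> DBP_inf F G f g Y (es k) (ms k) + zs k"
      using ps[of k] by (simp add: DBP_zargmin_iff)
    with DBP_inf_antimono[OF e_le[of k] ms_nonneg[of k] nonempty] show ?thesis by simp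
  qed
  show "eventually (\<lambda>k. objective (ps k) < b) sequentially" if "?L < b" for b
  proof -
    have "eventually (\<lambda>k. zs k < b - ?L) sequentially"
      using order_tendstoD(2)[OF zs] that by simp
    then show ?thesis by (rule eventually_mono) (use upper in \<open>smt (verit)\<close>)
  qed
qed

end

theorem corollary4:
  fixes F f :: "real^'n \<Rightarrow> real^'m \<Rightarrow> real"
    and g :: "real^'n \<Rightarrow> real^'m \<Rightarrow> real^'p"
    and G :: "real^'n \<Rightarrow> real^'q"
    and Y :: "(real^'m) set"
    and \<epsilon>bar :: real
  assumes A1_convex_f: "\<And>x. convex_on UNIV (\<lambda>y. f x y)"
    and A1_convex_g: "\<And>x i. convex_on UNIV (\<lambda>y. g x y $ i)"
    and A1_C2_f: "C2 (\<lambda>(x, y). f x y)"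
    and A1_C2_g: "C2 (\<lambda>(x, y). g x y)"
    and A2_Y: "compact Y" "convex Y"
    and A2_int: "{y. \<exists>x \<in> Xset G. \<forall>i. g x y $ i \<le> 0} \<subseteq> interior Y"
    and A3_F: "C2 (\<lambda>(x, y). F x y)"
    and A3_G: "C2 G"
    and R1: "\<And>x. x \<in> Xset G \<Longrightarrow> \<exists>y. \<forall>i. g x y $ i < 0"
    and R2_X: "compact (Xset G)" "Xset G \<noteq> {}"
    and R2_MFCQ: "\<And>x. x \<in> Xset G \<Longrightarrow> MFCQ G x"
    and eps: "\<epsilon>bar \<ge> 0"
  shows
    "(\<forall>(\<epsilon>s::nat \<Rightarrow> real) (\<mu>s::nat \<Rightarrow> real) (zs::nat \<Rightarrow> real) ps r p.
        (\<forall>k. \<epsilon>s k > \<epsilon>bar \<and> \<mu>s k > 0 \<and> zs k > 0) \<and>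
        \<epsilon>s \<longlonglongrightarrow> \<epsilon>bar \<and> \<mu>s \<longlonglongrightarrow> 0 \<and> zs \<longlonglongrightarrow> 0 \<and>
        (\<forall>k. ps k \<in> DBP_zargmin F G f g Y (\<epsilon>s k) (\<mu>s k) (zs k)) \<and>
        strict_mono r \<and> (ps \<circ> r) \<longlonglongrightarrow> p
        \<longrightarrow> p \<in> DBP_argmin F G f g Y \<epsilon>bar 0)
   \<and> (\<forall>(\<epsilon>s::nat \<Rightarrow> real) (\<mu>s::nat \<Rightarrow> real) (zs::nat \<Rightarrow> real) ps.
        (\<forall>k. \<epsilon>s k > \<epsilon>bar \<and> \<mu>s k > 0 \<and> zs k > 0) \<and>
        \<epsilon>s \<longlonglongrightarrow> \<epsilon>bar \<and> \<mu>s \<longlonglongrightarrow> 0 \<and> zs \<longlonglongrightarrow> 0 \<and>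
        (\<forall>k. ps k \<in> DBP_zargmin F G f g Y (\<epsilon>s k) (\<mu>s k) (zs k))
        \<longrightarrow> ((\<lambda>k. case ps k of (x, y, lam) \<Rightarrow> F x y) \<longlonglongrightarrow> DBP_inf F G f g Y \<epsilon>bar 0))"
proof -
  interpret dual_bilevel F f g G Y
    using A1_convex_g A2_Y(1) A2_int interior_subset[of Y] R1 R2_X
    by unfold_locales (auto simp: C2_imp_continuous_on A1_C2_f A1_C2_g A3_F A3_G)
  show ?thesis
  proof (intro conjI allI impI; elim conjE)
    fix es ms zs :: "nat \<Rightarrow> real" and ps r p
    assume "\<forall>k. \<epsilon>bar < es k \<and> 0 < ms k \<and> 0 < zs k" "es \<longlonglongrightarrow> \<epsilon>bar" "ms \<longlonglongrightarrow> 0" "zs \<longlonglongrightarrow> 0"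
      "\<forall>k. ps k \<in> DBP_zargmin F G f g Y (es k) (ms k) (zs k)" "strict_mono r" "(ps \<circ> r) \<longlonglongrightarrow> p"
    then show "p \<in> DBP_argmin F G f g Y \<epsilon>bar 0"
      by (intro zargmin_limit_in_argmin[of \<epsilon>bar "es \<circ> r" "ms \<circ> r" "zs \<circ> r" "ps \<circ> r"])
        (auto intro: less_imp_le LIMSEQ_subseq_LIMSEQ)
  next
    fix es ms zs :: "nat \<Rightarrow> real" and ps
    assume "\<forall>k. \<epsilon>bar < es k \<and> 0 < ms k \<and> 0 < zs k" "es \<longlonglongrightarrow> \<epsilon>bar" "ms \<longlonglongrightarrow> 0" "zs \<longlonglongrightarrow> 0"
      "\<forall>k. ps k \<in> DBP_zargmin F G f g Y (es k) (ms k) (zs k)"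
    then show "(\<lambda>k. case ps k of (x, y, lam) \<Rightarrow> F x y) \<longlonglongrightarrow> DBP_inf F G f g Y \<epsilon>bar 0"
      by (intro zargmin_objective_tendsto_inf[of \<epsilon>bar es ms zs ps]) (auto intro: less_imp_le)
  qed
qed

end
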